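(* For every $n\ge 1$, the symmetric group $S_n$ has a mixing sequence consisting of involutions of length at most $\frac{3}{2}\lfloor\log_2(n!)\rfloor+\frac{1}{2}n$; in particular $\mathrm{mixlen}(S_n)\le \frac{3}{2}\lfloor\log_2(n!)\rfloor+\frac{1}{2}n$.
   Context: For a finite group $G$, a random subproduct is a random element $g_1^{\epsilon_1}\cdots g_k^{\epsilon_k}$ where $g_1,\dots,g_k\in G$ are fixed and $\epsilon_1,\dots,\epsilon_k$ are independent Bernoulli random variables with $\epsilon_i\sim\mathrm{Ber}(p_i)$, $p_i\in[0,1]$. If such a random subproduct is distributed exactly uniformly on $G$, then $(g_1,p_1),\dots,(g_k,p_k)$ is a mixing sequence of $G$ of length $k$, and $G$ is mixable. The mixing length $\mathrm{mixlen}(G)$ is the minimal length of a mixing sequence of $G$. *)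

theory Defs
  imports "HOL-Algebra.Sym_Groups" "HOL-Probability.Probability_Mass_Function"
begin

definition random_subproduct :: "('a, 'b) monoid_scheme \<Rightarrow> ('a \<times> real) list \<Rightarrow> 'a pmf" where
  "random_subproduct G s =
     foldl (\<lambda>M (g, p). bind_pmf M (\<lambda>h. map_pmf (\<lambda>e. if e then h \<otimes>\<^bsub>G\<^esub> g else h) (bernoulli_pmf p)))
           (return_pmf \<one>\<^bsub>G\<^esub>) s"

definition mixing_seq :: "('a, 'b) monoid_scheme \<Rightarrow> ('a \<times> real) list \<Rightarrow> bool" where
  "mixing_seq G s \<longleftrightarrow>
     (\<forall>(g, p) \<in> set s. g \<in> carrier G \<and> 0 \<le> p \<and> p \<le> 1) \<and>
     random_subproduct G s = pmf_of_set (carrier G)"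

definition mixlen :: "('a, 'b) monoid_scheme \<Rightarrow> nat" where
  "mixlen G = (LEAST k. \<exists>s. mixing_seq G s \<and> length s = k)"

definition involution :: "('a, 'b) monoid_scheme \<Rightarrow> 'a \<Rightarrow> bool" where
  "involution G g \<longleftrightarrow> g \<in> carrier G \<and> g \<noteq> \<one>\<^bsub>G\<^esub> \<and> g \<otimes>\<^bsub>G\<^esub> g = \<one>\<^bsub>G\<^esub>"

end

theory Submission
  imports Defs
begin

(* Let H = S_m be the stabiliser of m+1 in S_{m+1}. If h is uniform on H and y is an independent
  random element of S_{m+1}, then h y is uniform on S_{m+1} as soon as the right coset H y is
  uniform; and H y is determined by the point y^-1(m+1). When y is a random subproduct of
  involutions t_1 ... t_r, that point is the end of the random walk which starts at m+1 and applies
  t_1, ..., t_r in turn, each with its own probability. A walk that spreads a point uniformly over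
  an interval of length k is built recursively: for even k spread over the upper half, then swap
  the two halves with probability 1/2; for odd k first move the point one step down with probability
  (k-1)/k, then spread over the remaining k-1 points. Appending such a walk for k = 2, ..., n to a
  mixing sequence of S_{k-1} gives one for S_k. The walk for k has about log2 k plus the number of
  binary digits 1 of k steps; the bound on their sum follows by induction along n -> n div 2 from
  4^m (m!)^2 <= (2m+1)! and (4^m (m!)^2)^2 <= 4m ((2m)!)^2. *)


section \<open>Random subproducts\<close>

lemma random_subproduct_Nil [simp]: "random_subproduct G [] = return_pmf \<one>\<^bsub>G\<^esub>"
  by (simp add: random_subproduct_def)

lemma random_subproduct_snoc [simp]:
  "random_subproduct G (s @ [(g, p)]) =
     bind_pmf (random_subproduct G s) (\<lambda>h. map_pmf (\<lambda>e. if e then h \<otimes>\<^bsub>G\<^esub> g else h) (bernoulli_pmf p))"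
  by (simp add: random_subproduct_def)

lemma (in monoid) set_pmf_random_subproduct:
  assumes "\<forall>(g, p) \<in> set s. g \<in> carrier G"
  shows "set_pmf (random_subproduct G s) \<subseteq> carrier G"
  using assms by (induction s rule: rev_induct) (auto simp: subset_eq)

lemma (in monoid) random_subproduct_append:
  assumes "\<forall>(g, p) \<in> set (xs @ ys). g \<in> carrier G"
  shows "random_subproduct G (xs @ ys) =
           bind_pmf (random_subproduct G xs) (\<lambda>h. map_pmf (\<lambda>y. h \<otimes> y) (random_subproduct G ys))"
  using assms
proof (induction ys rule: rev_induct)
  case Nil
  have "set_pmf (random_subproduct G xs) \<subseteq> carrier G"
    using Nil by (intro set_pmf_random_subproduct) simp
  then have "bind_pmf (random_subproduct G xs) (\<lambda>h. return_pmf (h \<otimes> \<one>)) = random_subproduct G xs"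
    by (subst bind_pmf_cong[OF refl, where g = return_pmf]) (auto simp: bind_return_pmf')
  then show ?case by simp
next
  case (snoc gp ys)
  obtain g p where gp: "gp = (g, p)" by fastforce
  have g: "g \<in> carrier G" and xs: "set_pmf (random_subproduct G xs) \<subseteq> carrier G"
      and ys: "set_pmf (random_subproduct G ys) \<subseteq> carrier G"
    using snoc.prems gp by (auto intro!: set_pmf_random_subproduct)
  have IH: "random_subproduct G (xs @ ys) =
           bind_pmf (random_subproduct G xs) (\<lambda>h. map_pmf (\<lambda>y. h \<otimes> y) (random_subproduct G ys))"
    using snoc by simp
  show ?case
    unfolding gp append_assoc[symmetric] random_subproduct_snoc IH
    using g xs ys
    by (simp add: bind_assoc_pmf bind_map_pmf map_bind_pmf map_pmf_comp)
       (intro bind_pmf_cong map_pmf_cong refl; auto simp: m_assoc subset_eq)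
qed

section \<open>Random walks of a point\<close>

fun point_walk :: "'a \<Rightarrow> (('a \<Rightarrow> 'a) \<times> real) list \<Rightarrow> 'a pmf" where
  "point_walk x [] = return_pmf x"
| "point_walk x ((t, p) # s) = bind_pmf (bernoulli_pmf p) (\<lambda>e. point_walk (if e then t x else x) s)"

lemma point_walk_append: "point_walk x (s @ s') = bind_pmf (point_walk x s) (\<lambda>y. point_walk y s')"
  by (induction x s rule: point_walk.induct)
     (simp_all add: bind_return_pmf bind_assoc_pmf cong: bind_pmf_cong)

lemma point_walk_snoc:
  "point_walk x (s @ [(t, p)]) =
     bind_pmf (point_walk x s) (\<lambda>y. map_pmf (\<lambda>e. if e then t y else y) (bernoulli_pmf p))"
  by (simp add: point_walk_append map_pmf_def cong: if_cong)

lemma point_walk_fixed: "\<forall>(t, p) \<in> set s. t x = x \<Longrightarrow> point_walk x s = return_pmf x"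
proof (induction s)
  case (Cons tp s)
  obtain t p where tp: "tp = (t, p)" by fastforce
  with Cons have "t x = x" "point_walk x s = return_pmf x" by auto
  then show ?case by (simp add: tp cong: if_cong)
qed simp

lemma map_inv_random_subproduct_sym_group:
  assumes "\<forall>(t, p) \<in> set s. t \<in> carrier (sym_group n) \<and> t \<circ> t = id"
  shows "map_pmf (\<lambda>\<sigma>. inv' \<sigma> x) (random_subproduct (sym_group n) s) = point_walk x s"
  using assms
proof (induction s rule: rev_induct)
  case Nil
  then show ?case by (simp add: sym_group_one)
next
  case (snoc tp s)
  obtain t p where tp: "tp = (t, p)" by fastforce
  have "(t, p) \<in> set (s @ [tp])" using tp by simp
  from bspec[OF snoc.prems this] have t: "t \<in> carrier (sym_group n)" "t \<circ> t = id"
    by (simp_all only: case_prod_conv)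
  have inv_mult: "inv' (h \<circ> t) = t \<circ> inv' h" if "h \<in> set_pmf (random_subproduct (sym_group n) s)" for h
  proof -
    have "set_pmf (random_subproduct (sym_group n) s) \<subseteq> carrier (sym_group n)"
      using snoc.prems
      by (intro monoid.set_pmf_random_subproduct[OF group.is_monoid[OF sym_group_is_group]]) auto
    with that t have "bij h" "bij t" by (auto simp: sym_group_carrier permutes_bij)
    then show ?thesis using o_inv_distrib inv_unique_comp[OF t(2) t(2)] by metis
  qed
  have "map_pmf (\<lambda>\<sigma>. inv' \<sigma> x) (random_subproduct (sym_group n) (s @ [tp])) =
      bind_pmf (random_subproduct (sym_group n) s)
        (\<lambda>h. map_pmf (\<lambda>e. inv' (if e then h \<circ> t else h) x) (bernoulli_pmf p))"
    by (simp add: tp sym_group_mult map_bind_pmf map_pmf_comp cong: if_cong)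
  also have "\<dots> = bind_pmf (random_subproduct (sym_group n) s)
        (\<lambda>h. map_pmf (\<lambda>e. if e then t (inv' h x) else inv' h x) (bernoulli_pmf p))"
    using inv_mult by (intro bind_pmf_cong map_pmf_cong refl) simp
  also have "\<dots> = bind_pmf (map_pmf (\<lambda>\<sigma>. inv' \<sigma> x) (random_subproduct (sym_group n) s))
        (\<lambda>y. map_pmf (\<lambda>e. if e then t y else y) (bernoulli_pmf p))"
    by (simp add: bind_map_pmf)
  also have "\<dots> = point_walk x (s @ [tp])"
    using snoc by (simp add: tp point_walk_snoc)
  finally show ?case .
qed

section \<open>Spreading a point uniformly over an interval\<close>

lemma bind_bernoulli_pmf_of_set_Un:
  assumes "finite A" "finite B" "A \<noteq> {}" "B \<noteq> {}" "A \<inter> B = {}"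
  shows "bind_pmf (bernoulli_pmf (card A / (card A + card B))) (\<lambda>e. if e then pmf_of_set A else pmf_of_set B) =
         pmf_of_set (A \<union> B)"
proof (rule pmf_eqI)
  fix x
  have pos: "card A > 0" "card B > 0" using assms by (simp_all add: card_gt_0_iff)
  have c: "card (A \<union> B) = card A + card B" using assms by (simp add: card_Un_disjoint)
  show "pmf (bind_pmf (bernoulli_pmf (card A / (card A + card B)))
           (\<lambda>e. if e then pmf_of_set A else pmf_of_set B)) x = pmf (pmf_of_set (A \<union> B)) x"
    using assms pos by (auto simp: pmf_bind pmf_of_set indicator_def c divide_simps)
qed

definition block_swap :: "nat \<Rightarrow> nat \<Rightarrow> nat \<Rightarrow> nat" where
  "block_swap lo a u =
     (if lo \<le> u \<and> u < lo + a then u + a else if lo + a \<le> u \<and> u < lo + 2 * a then u - a else u)"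

lemma block_swap_involution: "block_swap lo a \<circ> block_swap lo a = id"
  by (rule ext) (auto simp: block_swap_def)

lemma block_swap_permutes: "block_swap lo a permutes {lo..<lo + 2 * a}"
  by (rule inj_imp_permutes) (auto simp: block_swap_def inj_on_def split: if_splits)

lemma block_swap_image_upper_half: "block_swap lo a ` {lo + a..<lo + 2 * a} = {lo..<lo + a}"
proof
  show "block_swap lo a ` {lo + a..<lo + 2 * a} \<subseteq> {lo..<lo + a}" by (auto simp: block_swap_def)
  show "{lo..<lo + a} \<subseteq> block_swap lo a ` {lo + a..<lo + 2 * a}"
  proof
    fix y assume "y \<in> {lo..<lo + a}"
    then have "y + a \<in> {lo + a..<lo + 2 * a}" "y = block_swap lo a (y + a)"
      by (auto simp: block_swap_def)
    then show "y \<in> block_swap lo a ` {lo + a..<lo + 2 * a}" by (rule rev_image_eqI)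
  qed
qed

lemma halving_cases [case_names small even odd]:
  fixes k :: nat
  obtains "k \<le> 1" | a where "1 \<le> a" "k = 2 * a" | a where "1 \<le> a" "k = 2 * a + 1"
proof (cases "k \<le> 1")
  case False
  then show ?thesis using that(2,3) by (cases "even k") (auto elim!: evenE oddE)
qed (rule that(1))

function spreading_seq :: "nat \<Rightarrow> nat \<Rightarrow> ((nat \<Rightarrow> nat) \<times> real) list" where
  "spreading_seq lo k =
     (if k \<le> 1 then []
      else if even k then spreading_seq (lo + k div 2) (k div 2) @ [(block_swap lo (k div 2), 1 / 2)]
      else (Transposition.transpose (lo + k - 2) (lo + k - 1), (real k - 1) / real k) # spreading_seq lo (k - 1))"
  by pat_completeness auto
termination by (relation "Wellfounded.measure snd") auto

declare spreading_seq.simps [simp del]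

lemma spreading_seq_even:
  "1 \<le> a \<Longrightarrow> spreading_seq lo (2 * a) = spreading_seq (lo + a) a @ [(block_swap lo a, 1 / 2)]"
  by (subst spreading_seq.simps) simp

lemma spreading_seq_odd:
  "1 \<le> a \<Longrightarrow> spreading_seq lo (2 * a + 1) =
     (Transposition.transpose (lo + 2 * a - 1) (lo + 2 * a), real (2 * a) / real (2 * a + 1)) # spreading_seq lo (2 * a)"
  by (subst spreading_seq.simps) simp

lemma map_block_swap_upper_half:
  assumes "1 \<le> a"
  shows "map_pmf (block_swap lo a) (pmf_of_set {lo + a..<lo + 2 * a}) = pmf_of_set {lo..<lo + a}"
  using assms
  by (subst map_pmf_of_set_inj[OF permutes_inj_on[OF block_swap_permutes]])
     (auto simp: block_swap_image_upper_half)

lemma spreading_seq_memD: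
  assumes "(t, p) \<in> set (spreading_seq lo k)"
  shows "t permutes {lo..<lo + k} \<and> t \<circ> t = id \<and> t \<noteq> id \<and> 0 \<le> p \<and> p \<le> 1"
  using assms
proof (induction k arbitrary: lo rule: less_induct)
  case (less k)
  show ?case
  proof (cases k rule: halving_cases)
    case small
    then show ?thesis using less.prems by (simp add: spreading_seq.simps)
  next
    case (even a)
    then consider "(t, p) \<in> set (spreading_seq (lo + a) a)" | "t = block_swap lo a" "p = 1 / 2"
      using less.prems by (auto simp: spreading_seq_even)
    then show ?thesis
    proof cases
      case 1
      then have "t permutes {lo + a..<lo + a + a} \<and> t \<circ> t = id \<and> t \<noteq> id \<and> 0 \<le> p \<and> p \<le> 1"
        using even by (intro less.IH) auto
      moreover have "{lo + a..<lo + a + a} \<subseteq> {lo..<lo + k}" using even by auto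
      ultimately show ?thesis using permutes_subset by blast
    next
      case 2
      have "block_swap lo a lo \<noteq> lo" using even by (simp add: block_swap_def)
      then show ?thesis using 2 even block_swap_permutes block_swap_involution by fastforce
    qed
  next
    case (odd a)
    then consider "(t, p) \<in> set (spreading_seq lo (2 * a))"
      | "t = Transposition.transpose (lo + 2 * a - 1) (lo + 2 * a)" "p = real (2 * a) / real (2 * a + 1)"
      using less.prems unfolding odd(2) spreading_seq_odd[OF odd(1)] by auto
    then show ?thesis
    proof cases
      case 1
      then have "t permutes {lo..<lo + 2 * a} \<and> t \<circ> t = id \<and> t \<noteq> id \<and> 0 \<le> p \<and> p \<le> 1"
        using odd by (intro less.IH) auto
      moreover have "{lo..<lo + 2 * a} \<subseteq> {lo..<lo + k}" using odd by auto
      ultimately show ?thesis using permutes_subset by blast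
    next
      case 2
      have "t permutes {lo..<lo + k}" unfolding 2 by (rule permutes_swap_id) (use odd in auto)
      moreover have "t \<noteq> id" unfolding 2 transpose_eq_id_iff using odd by linarith
      moreover have "0 \<le> p \<and> p \<le> 1" unfolding 2 by simp
      ultimately show ?thesis unfolding 2 by (metis transpose_comp_involutory)
    qed
  qed
qed

lemma point_walk_spreading_seq:
  "1 \<le> k \<Longrightarrow> point_walk (lo + k - 1) (spreading_seq lo k) = pmf_of_set {lo..<lo + k}"
proof (induction k arbitrary: lo rule: less_induct)
  case (less k)
  show ?case
  proof (cases k rule: halving_cases)
    case small
    with less.prems have "k = 1" by simp
    then show ?thesis by (simp add: spreading_seq.simps pmf_of_set_singleton)
  next
    case (even a)
    define U where "U = {lo + a..<lo + 2 * a}"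
    have IH: "point_walk (lo + 2 * a - 1) (spreading_seq (lo + a) a) = pmf_of_set U"
      using less.IH[of a "lo + a"] even by (simp add: U_def mult_2 add.assoc)
    have "point_walk (lo + k - 1) (spreading_seq lo k) =
        bind_pmf (pmf_of_set U) (\<lambda>y. map_pmf (\<lambda>e. if e then block_swap lo a y else y) (bernoulli_pmf (1 / 2)))"
      unfolding even(2) spreading_seq_even[OF even(1)] point_walk_snoc IH ..
    also have "\<dots> = bind_pmf (bernoulli_pmf (1 / 2))
        (\<lambda>e. map_pmf (\<lambda>y. if e then block_swap lo a y else y) (pmf_of_set U))"
      unfolding map_pmf_def by (rule bind_commute_pmf)
    also have "\<dots> = bind_pmf (bernoulli_pmf (card {lo..<lo + a} / (card {lo..<lo + a} + card U)))
        (\<lambda>e. if e then pmf_of_set {lo..<lo + a} else pmf_of_set U)"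
      using even map_block_swap_upper_half[of a lo] by (intro bind_pmf_cong) (auto simp: U_def)
    also have "\<dots> = pmf_of_set ({lo..<lo + a} \<union> U)"
      using even by (intro bind_bernoulli_pmf_of_set_Un) (auto simp: U_def)
    also have "{lo..<lo + a} \<union> U = {lo..<lo + k}"
      using even by (auto simp: U_def)
    finally show ?thesis .
  next
    case (odd a)
    define r where "r = spreading_seq lo (2 * a)"
    have "point_walk (lo + 2 * a) r = return_pmf (lo + 2 * a)"
      by (rule point_walk_fixed) (auto simp: r_def dest!: spreading_seq_memD intro: permutes_not_in)
    moreover have "point_walk (lo + 2 * a - 1) r = pmf_of_set {lo..<lo + 2 * a}"
      using less.IH[of "2 * a" lo] odd by (simp add: r_def)
    ultimately have "point_walk (lo + k - 1) (spreading_seq lo k) =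
        bind_pmf (bernoulli_pmf (card {lo..<lo + 2 * a} / (card {lo..<lo + 2 * a} + card {lo + 2 * a})))
          (\<lambda>e. if e then pmf_of_set {lo..<lo + 2 * a} else pmf_of_set {lo + 2 * a})"
      unfolding odd(2) spreading_seq_odd[OF odd(1)] r_def[symmetric] using odd(1)
      by (simp add: pmf_of_set_singleton if_distrib[of "\<lambda>x. point_walk x r"] cong: if_cong)
    also have "\<dots> = pmf_of_set ({lo..<lo + 2 * a} \<union> {lo + 2 * a})"
      using odd by (intro bind_bernoulli_pmf_of_set_Un) auto
    also have "{lo..<lo + 2 * a} \<union> {lo + 2 * a} = {lo..<lo + k}"
      using odd by auto
    finally show ?thesis .
  qed
qed

section \<open>Uniformity through cosets\<close>

lemma (in group) uniform_subgroup_mult_uniform_coset: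
  assumes fin: "finite (carrier G)" and H: "subgroup H G" and Y: "set_pmf Y \<subseteq> carrier G"
    and cosets: "map_pmf (\<lambda>y. H #> y) Y = pmf_of_set (rcosets H)"
  shows "bind_pmf (pmf_of_set H) (\<lambda>h. map_pmf (\<lambda>y. h \<otimes> y) Y) = pmf_of_set (carrier G)"
proof -
  have HG: "H \<subseteq> carrier G" using H by (rule subgroup.subset)
  then have "finite H" using fin by (rule finite_subset)
  have "\<one> \<in> H" using H by (rule subgroup.one_closed)
  then have "H \<noteq> {}" by blast
  have "bind_pmf (pmf_of_set H) (\<lambda>h. map_pmf (\<lambda>y. h \<otimes> y) Y) =
        bind_pmf Y (\<lambda>y. map_pmf (\<lambda>h. h \<otimes> y) (pmf_of_set H))"
    unfolding map_pmf_def by (rule bind_commute_pmf)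
  also have "\<dots> = bind_pmf Y (\<lambda>y. pmf_of_set (H #> y))"
  proof (rule bind_pmf_cong[OF refl])
    fix y assume "y \<in> set_pmf Y"
    with Y have "inj_on (\<lambda>h. h \<otimes> y) H" using HG inj_on_g by blast
    moreover have "(\<lambda>h. h \<otimes> y) ` H = H #> y" by (auto simp: r_coset_def)
    ultimately show "map_pmf (\<lambda>h. h \<otimes> y) (pmf_of_set H) = pmf_of_set (H #> y)"
      using \<open>H \<noteq> {}\<close> \<open>finite H\<close> by (metis map_pmf_of_set_inj)
  qed
  also have "\<dots> = bind_pmf (pmf_of_set (rcosets H)) pmf_of_set"
    by (simp flip: cosets add: bind_map_pmf)
  also have "\<dots> = pmf_of_set (\<Union>(rcosets H))"
  proof (rule pmf_of_set_UN[where f = "\<lambda>R. R" and n = "card H", simplified, symmetric])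
    show "finite (\<Union>(rcosets H))" using fin H rcosets_part_G by simp
    show "rcosets H \<noteq> {}" using HG rcosetsI by blast
    show "card R = card H" if "R \<in> rcosets H" for R
      using that HG card_rcosets_equal by simp
    show "R \<noteq> {}" if "R \<in> rcosets H" for R
      using H that by (rule subgroup.rcosets_non_empty)
    show "disjoint_family_on (\<lambda>R. R) (rcosets H)"
      using rcos_disjoint[OF H] by (auto simp: disjoint_family_on_def pairwise_def disjnt_def)
  qed
  also have "\<Union>(rcosets H) = carrier G" using H by (rule rcosets_part_G)
  finally show ?thesis .
qed

lemma subgroup_sym_group: "m \<le> n \<Longrightarrow> subgroup (carrier (sym_group m)) (sym_group n)"
proof (rule group.subgroupI[OF sym_group_is_group])
  assume "m \<le> n"
  then have "{1..m} \<subseteq> {1..n}" by auto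
  show sub: "carrier (sym_group m) \<subseteq> carrier (sym_group n)"
  proof
    fix \<sigma> assume "\<sigma> \<in> carrier (sym_group m)"
    then have "\<sigma> permutes {1..m}" by (simp add: sym_group_carrier)
    then have "\<sigma> permutes {1..n}" using \<open>{1..m} \<subseteq> {1..n}\<close> by (rule permutes_subset)
    then show "\<sigma> \<in> carrier (sym_group n)" by (simp add: sym_group_carrier)
  qed
  show "carrier (sym_group m) \<noteq> {}" using permutes_id by (metis empty_iff sym_group_carrier)
  show "inv\<^bsub>sym_group n\<^esub> \<sigma> \<in> carrier (sym_group m)" if "\<sigma> \<in> carrier (sym_group m)" for \<sigma>
    using that sub sym_group_inv_closed by auto
  show "\<sigma> \<otimes>\<^bsub>sym_group n\<^esub> \<tau> \<in> carrier (sym_group m)"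
    if "\<sigma> \<in> carrier (sym_group m)" "\<tau> \<in> carrier (sym_group m)" for \<sigma> \<tau>
    using that by (simp add: sym_group_carrier sym_group_mult permutes_compose)
qed

lemma r_coset_sym_group:
  assumes y: "y \<in> carrier (sym_group (Suc m))"
  shows "carrier (sym_group m) #>\<^bsub>sym_group (Suc m)\<^esub> y =
         {\<sigma> \<in> carrier (sym_group (Suc m)). \<sigma> (inv' y (Suc m)) = Suc m}"
proof (intro equalityI subsetI)
  have y: "y permutes {1..Suc m}" using y by (simp add: sym_group_carrier)
  fix \<sigma>
  assume "\<sigma> \<in> carrier (sym_group m) #>\<^bsub>sym_group (Suc m)\<^esub> y"
  then obtain h where h: "h permutes {1..m}" and \<sigma>: "\<sigma> = h \<circ> y"
    by (auto simp: r_coset_def sym_group_carrier sym_group_mult)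
  have "h permutes {1..Suc m}" using h by (rule permutes_subset) auto
  then have "\<sigma> permutes {1..Suc m}" unfolding \<sigma> using y by (rule permutes_compose[rotated])
  moreover have "\<sigma> (inv' y (Suc m)) = Suc m"
    unfolding \<sigma> using permutes_inverses(1)[OF y] permutes_not_in[OF h] by simp
  ultimately show "\<sigma> \<in> {\<sigma> \<in> carrier (sym_group (Suc m)). \<sigma> (inv' y (Suc m)) = Suc m}"
    by (simp add: sym_group_carrier)
next
  have y: "y permutes {1..Suc m}" using y by (simp add: sym_group_carrier)
  fix \<sigma>
  assume "\<sigma> \<in> {\<sigma> \<in> carrier (sym_group (Suc m)). \<sigma> (inv' y (Suc m)) = Suc m}"
  then have \<sigma>: "\<sigma> permutes {1..Suc m}" and fix_top: "\<sigma> (inv' y (Suc m)) = Suc m"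
    by (simp_all add: sym_group_carrier)
  define h where "h = \<sigma> \<circ> inv' y"
  have "h permutes {1..Suc m}" unfolding h_def using permutes_inv[OF y] \<sigma> by (rule permutes_compose)
  moreover have "h (Suc m) = Suc m" using fix_top by (simp add: h_def)
  ultimately have "h permutes {1..m}"
    by (rule_tac permutes_superset) (auto simp: le_Suc_eq)
  moreover have "\<sigma> = h \<circ> y" by (simp add: h_def o_assoc[symmetric] permutes_inv_o(2)[OF y])
  ultimately show "\<sigma> \<in> carrier (sym_group m) #>\<^bsub>sym_group (Suc m)\<^esub> y"
    by (auto simp: r_coset_def sym_group_carrier sym_group_mult)
qed

lemma rcosets_sym_group_uniform:
  assumes Y: "set_pmf Y \<subseteq> carrier (sym_group (Suc m))"
    and preimage: "map_pmf (\<lambda>y. inv' y (Suc m)) Y = pmf_of_set {1..Suc m}"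
  shows "map_pmf (\<lambda>y. carrier (sym_group m) #>\<^bsub>sym_group (Suc m)\<^esub> y) Y =
         pmf_of_set (rcosets\<^bsub>sym_group (Suc m)\<^esub> (carrier (sym_group m)))"
proof -
  define C where "C j = {\<sigma> \<in> carrier (sym_group (Suc m)). \<sigma> j = Suc m}" for j
  define \<tau> where "\<tau> j = Transposition.transpose j (Suc m)" for j
  have \<tau>: "\<tau> j \<in> carrier (sym_group (Suc m))" "inv' (\<tau> j) (Suc m) = j" if "j \<in> {1..Suc m}" for j
    using that by (simp_all add: \<tau>_def sym_group_carrier permutes_swap_id)
  have coset: "carrier (sym_group m) #>\<^bsub>sym_group (Suc m)\<^esub> y = C (inv' y (Suc m))"
    if "y \<in> carrier (sym_group (Suc m))" for y
    using that unfolding C_def by (rule r_coset_sym_group)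
  have "inj_on C {1..Suc m}"
  proof (rule inj_onI)
    fix i j assume ij: "i \<in> {1..Suc m}" "j \<in> {1..Suc m}" and "C i = C j"
    have "\<tau> i \<in> C i" using \<tau>(1)[OF ij(1)] by (simp add: C_def \<tau>_def)
    with \<open>C i = C j\<close> have "\<tau> i \<in> C j" by simp
    then show "i = j" by (auto simp: C_def \<tau>_def transpose_eq_iff)
  qed
  moreover have "C ` {1..Suc m} = rcosets\<^bsub>sym_group (Suc m)\<^esub> (carrier (sym_group m))"
  proof
    show "C ` {1..Suc m} \<subseteq> rcosets\<^bsub>sym_group (Suc m)\<^esub> (carrier (sym_group m))"
    proof
      fix R assume "R \<in> C ` {1..Suc m}"
      then obtain j where j: "j \<in> {1..Suc m}" and R: "R = C j" by blast
      have "R = carrier (sym_group m) #>\<^bsub>sym_group (Suc m)\<^esub> \<tau> j"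
        using R coset[OF \<tau>(1)[OF j]] \<tau>(2)[OF j] by simp
      also have "\<dots> \<in> rcosets\<^bsub>sym_group (Suc m)\<^esub> (carrier (sym_group m))"
        using subgroup.subset[OF subgroup_sym_group] \<tau>(1)[OF j]
        by (intro group.rcosetsI[OF sym_group_is_group]) auto
      finally show "R \<in> rcosets\<^bsub>sym_group (Suc m)\<^esub> (carrier (sym_group m))" .
    qed
    show "rcosets\<^bsub>sym_group (Suc m)\<^esub> (carrier (sym_group m)) \<subseteq> C ` {1..Suc m}"
    proof
      fix R assume "R \<in> rcosets\<^bsub>sym_group (Suc m)\<^esub> (carrier (sym_group m))"
      then obtain y where y: "y \<in> carrier (sym_group (Suc m))"
        and R: "R = carrier (sym_group m) #>\<^bsub>sym_group (Suc m)\<^esub> y"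
        unfolding RCOSETS_def by blast
      have "y permutes {1..Suc m}" using y by (simp add: sym_group_carrier)
      then have "inv' y (Suc m) \<in> {1..Suc m}" by (subst permutes_in_image[OF permutes_inv]) auto
      then show "R \<in> C ` {1..Suc m}" using R coset[OF y] by blast
    qed
  qed
  ultimately have "map_pmf C (pmf_of_set {1..Suc m}) =
      pmf_of_set (rcosets\<^bsub>sym_group (Suc m)\<^esub> (carrier (sym_group m)))"
    by (simp add: map_pmf_of_set_inj)
  moreover have "map_pmf (\<lambda>y. carrier (sym_group m) #>\<^bsub>sym_group (Suc m)\<^esub> y) Y =
      map_pmf C (map_pmf (\<lambda>y. inv' y (Suc m)) Y)"
    using Y coset by (auto simp: map_pmf_comp intro!: map_pmf_cong)
  ultimately show ?thesis by (simp add: preimage)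
qed

section \<open>A mixing sequence of involutions\<close>

primrec sym_mixing_seq :: "nat \<Rightarrow> ((nat \<Rightarrow> nat) \<times> real) list" where
  "sym_mixing_seq 0 = []"
| "sym_mixing_seq (Suc m) = sym_mixing_seq m @ spreading_seq 1 (Suc m)"

lemma sym_mixing_seq_memD:
  assumes "(t, p) \<in> set (sym_mixing_seq n)"
  shows "t \<in> carrier (sym_group n) \<and> t \<circ> t = id \<and> t \<noteq> id \<and> 0 \<le> p \<and> p \<le> 1"
  using assms
proof (induction n)
  case (Suc m)
  consider "(t, p) \<in> set (sym_mixing_seq m)" | "(t, p) \<in> set (spreading_seq 1 (Suc m))"
    using Suc.prems by auto
  then show ?case
  proof cases
    case 1
    have "carrier (sym_group m) \<subseteq> carrier (sym_group (Suc m))"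
      using subgroup_sym_group[of m "Suc m"] by (simp add: subgroup.subset)
    with Suc.IH[OF 1] show ?thesis by blast
  next
    case 2
    have "{1..<1 + Suc m} = {1..Suc m}" by auto
    with spreading_seq_memD[OF 2] show ?thesis by (simp only: sym_group_carrier) simp
  qed
qed simp

lemma random_subproduct_sym_group_eq:
  "random_subproduct (sym_group m) s = random_subproduct (sym_group n) s"
  by (simp add: random_subproduct_def sym_group_mult sym_group_one cong: if_cong)

lemma random_subproduct_sym_mixing_seq:
  "random_subproduct (sym_group n) (sym_mixing_seq n) = pmf_of_set (carrier (sym_group n))"
proof (induction n)
  case 0
  have "carrier (sym_group 0) = {id}" by (auto simp: sym_group_carrier)
  then show ?case by (simp add: sym_group_one pmf_of_set_singleton)
next
  case (Suc m)
  let ?G = "sym_group (Suc m)" and ?H = "carrier (sym_group m)"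
  define Y where "Y = random_subproduct ?G (spreading_seq 1 (Suc m))"
  interpret G: group ?G by (rule sym_group_is_group)
  have elems: "\<forall>(t, p) \<in> set (sym_mixing_seq (Suc m)). t \<in> carrier ?G \<and> t \<circ> t = id"
    using sym_mixing_seq_memD by fast
  then have Y: "set_pmf Y \<subseteq> carrier ?G"
    unfolding Y_def by (intro G.set_pmf_random_subproduct) auto
  have "map_pmf (\<lambda>y. inv' y (Suc m)) Y = point_walk (1 + Suc m - 1) (spreading_seq 1 (Suc m))"
    unfolding Y_def using elems by (subst map_inv_random_subproduct_sym_group) auto
  also have "\<dots> = pmf_of_set {1..Suc m}"
    by (subst point_walk_spreading_seq) (auto simp: atLeastLessThanSuc_atLeastAtMost)
  finally have "map_pmf (\<lambda>y. ?H #>\<^bsub>?G\<^esub> y) Y = pmf_of_set (rcosets\<^bsub>?G\<^esub> ?H)"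
    using Y by (intro rcosets_sym_group_uniform)
  then have "bind_pmf (pmf_of_set ?H) (\<lambda>h. map_pmf (\<lambda>y. h \<otimes>\<^bsub>?G\<^esub> y) Y) = pmf_of_set (carrier ?G)"
    using Y by (intro G.uniform_subgroup_mult_uniform_coset subgroup_sym_group)
       (auto simp: sym_group_def finite_permutations)
  moreover have "random_subproduct ?G (sym_mixing_seq (Suc m)) =
      bind_pmf (random_subproduct ?G (sym_mixing_seq m)) (\<lambda>h. map_pmf (\<lambda>y. h \<otimes>\<^bsub>?G\<^esub> y) Y)"
    unfolding Y_def sym_mixing_seq.simps using elems by (intro G.random_subproduct_append) auto
  moreover have "random_subproduct ?G (sym_mixing_seq m) = pmf_of_set ?H"
    using Suc.IH random_subproduct_sym_group_eq by metis
  ultimately show ?case by simp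
qed

section \<open>Length of the mixing sequence\<close>

function spread_length :: "nat \<Rightarrow> nat" where
  "spread_length k =
     (if k \<le> 1 then 0 else if even k then spread_length (k div 2) + 1 else spread_length (k - 1) + 1)"
  by pat_completeness auto
termination by (relation "Wellfounded.measure id") auto

declare spread_length.simps [simp del]

lemma spread_length_le_one: "k \<le> 1 \<Longrightarrow> spread_length k = 0"
  by (subst spread_length.simps) simp

lemma spread_length_double: "1 \<le> a \<Longrightarrow> spread_length (2 * a) = spread_length a + 1"
  by (subst spread_length.simps) simp

lemma spread_length_double_Suc: "1 \<le> a \<Longrightarrow> spread_length (2 * a + 1) = spread_length a + 2"
  using spread_length_double by (subst spread_length.simps) simp

lemma length_spreading_seq: "length (spreading_seq lo k) = spread_length k"
proof (induction k arbitrary: lo rule: less_induct)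
  case (less k)
  show ?case
  proof (cases k rule: halving_cases)
    case small
    then show ?thesis by (simp add: spreading_seq.simps spread_length_le_one)
  next
    case (even a)
    then show ?thesis using less.IH[of a] by (simp add: spreading_seq_even spread_length_double)
  next
    case (odd a)
    then show ?thesis using less.IH[of "2 * a"]
      unfolding odd(2) spreading_seq_odd[OF odd(1)] spread_length_double_Suc[OF odd(1)]
      by (simp add: spread_length_double)
  qed
qed

lemma less_two_pow_spread_length: "1 \<le> k \<Longrightarrow> k < 2 ^ (spread_length k + 1)"
proof (induction k rule: less_induct)
  case (less k)
  show ?case
  proof (cases k rule: halving_cases)
    case small
    then show ?thesis by (simp add: spread_length_le_one)
  next
    case (even a)
    then show ?thesis using less.IH[of a] by (simp add: spread_length_double)
  next
    case (odd a)
    then show ?thesis using less.IH[of a] unfolding odd(2) spread_length_double_Suc[OF odd(1)] by simp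
  qed
qed

lemma sum_spread_length_double_Suc:
  "(\<Sum>k = 1..2 * m + 1. spread_length k) = 2 * (\<Sum>k = 1..m. spread_length k) + 3 * m"
proof (induction m)
  case 0
  then show ?case by (simp add: spread_length_le_one)
next
  case (Suc m)
  then show ?case
    using spread_length_double[of "m + 1"] spread_length_double_Suc[of "m + 1"] by simp
qed

lemma four_pow_mult_fact_sq_le: "4 ^ m * (fact m)\<^sup>2 \<le> (fact (2 * m + 1) :: nat)"
proof (induction m)
  case (Suc m)
  have "4 ^ Suc m * (fact (Suc m))\<^sup>2 = (4 * (Suc m)\<^sup>2) * (4 ^ m * (fact m)\<^sup>2 :: nat)"
    by (simp add: power2_eq_square algebra_simps)
  also have "\<dots> \<le> ((2 * m + 3) * (2 * m + 2)) * fact (2 * m + 1)"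
    by (rule mult_mono[OF _ Suc.IH]) (simp_all add: power2_eq_square algebra_simps)
  also have "\<dots> = fact (2 * Suc m + 1)" by (simp add: algebra_simps)
  finally show ?case .
qed simp

lemma four_pow_mult_fact_sq_sq_le:
  "1 \<le> m \<Longrightarrow> (4 ^ m * (fact m)\<^sup>2)\<^sup>2 \<le> 4 * m * (fact (2 * m) :: nat)\<^sup>2"
proof (induction m rule: dec_induct)
  case base
  then show ?case by (simp add: numeral_eq_Suc)
next
  case (step m)
  have "(4 ^ Suc m * (fact (Suc m))\<^sup>2)\<^sup>2 = (16 * (Suc m)^4) * (4 ^ m * (fact m)\<^sup>2 :: nat)\<^sup>2"
    by (simp add: power2_eq_square power4_eq_xxxx algebra_simps)
  also have "\<dots> \<le> (16 * (Suc m)^4 * 4 * m) * (fact (2 * m))\<^sup>2"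
    using step.IH by (simp add: algebra_simps)
  also have "\<dots> \<le> (4 * Suc m * ((2 * m + 2) * (2 * m + 1))\<^sup>2) * (fact (2 * m))\<^sup>2"
  proof (rule mult_right_mono)
    have "4 * Suc m * ((2 * m + 2) * (2 * m + 1))\<^sup>2 = 16 * (Suc m)^4 * 4 * m + 16 * (Suc m)^3"
      by (simp add: power2_eq_square power3_eq_cube power4_eq_xxxx algebra_simps)
    then show "16 * (Suc m)^4 * 4 * m \<le> 4 * Suc m * ((2 * m + 2) * (2 * m + 1))\<^sup>2" by simp
  qed simp
  also have "\<dots> = 4 * Suc m * (fact (2 * Suc m))\<^sup>2" by (simp add: power2_eq_square algebra_simps)
  finally show ?case .
qed

lemma log2_four: "log 2 (4 :: real) = 2"
  using log_pow_cancel[of "2 :: real" 2] by simp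

lemma log_fact_double_Suc_ge: "2 * log 2 (fact m) + 2 * m \<le> log 2 (fact (2 * m + 1))"
proof -
  have "real (4 ^ m * (fact m)\<^sup>2) \<le> real (fact (2 * m + 1))"
    using four_pow_mult_fact_sq_le[of m] by (simp only: of_nat_le_iff)
  then have "log 2 (4 ^ m * (fact m)\<^sup>2) \<le> log 2 (fact (2 * m + 1))"
    by (intro log_mono) (simp_all only: of_nat_mult of_nat_power of_nat_fact of_nat_numeral, auto)
  moreover have "log 2 (4 ^ m * (fact m)\<^sup>2) = 2 * m + 2 * log 2 (fact m)"
    by (simp add: log_mult_pos log_nat_power log2_four)
  ultimately show ?thesis by simp
qed

lemma log_fact_double_ge:
  assumes "1 \<le> m"
  shows "4 * log 2 (fact m) + 4 * m \<le> 2 * log 2 (fact (2 * m)) + 2 + log 2 m"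
proof -
  have "real ((4 ^ m * (fact m)\<^sup>2)\<^sup>2) \<le> real (4 * m * (fact (2 * m))\<^sup>2)"
    using four_pow_mult_fact_sq_sq_le[OF assms] by (simp only: of_nat_le_iff)
  then have "log 2 ((4 ^ m * (fact m)\<^sup>2)\<^sup>2) \<le> log 2 (4 * m * (fact (2 * m))\<^sup>2)"
    by (intro log_mono) (simp_all only: of_nat_mult of_nat_power of_nat_fact of_nat_numeral, auto)
  moreover have "log 2 ((4 ^ m * (fact m)\<^sup>2)\<^sup>2) = 4 * m + 4 * log 2 (fact m)"
    by (simp add: log_mult_pos log_nat_power log2_four)
  moreover have "log 2 (4 * m * (fact (2 * m))\<^sup>2) = 2 + log 2 m + 2 * log 2 (fact (2 * m))"
    using assms by (simp add: log_mult_pos log_nat_power log2_four)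
  ultimately show ?thesis by simp
qed

lemma sum_spread_length_bound:
  "2 \<le> n \<Longrightarrow> 2 * real (\<Sum>k = 1..n. spread_length k) + 3 \<le> real n + 3 * log 2 (fact n)"
proof (induction n rule: less_induct)
  case (less n)
  have sum_odd: "real (\<Sum>k = 1..2 * a + 1. spread_length k) = 2 * real (\<Sum>k = 1..a. spread_length k) + 3 * a"
    for a using sum_spread_length_double_Suc[of a] by simp
  consider "n = 2" | "n = 3" | a where "2 \<le> a" "n = 2 * a" | a where "2 \<le> a" "n = 2 * a + 1"
    using less.prems by (cases n rule: halving_cases) fastforce+
  then show ?case
  proof cases
    case 1
    have "(\<Sum>k = 1..2. spread_length k) = spread_length 1 + spread_length (2 * 1)"
      by (simp add: numeral_2_eq_2 sum.cl_ivl_Suc)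
    then show ?thesis using 1 spread_length_double[of 1] by (simp add: spread_length_le_one)
  next
    case 2
    have "(2 :: real) < log 2 (fact 3)"
      using less_log2_of_power[of 2 6] by (simp add: numeral_eq_Suc)
    then show ?thesis using 2 sum_odd[of 1] by (simp add: spread_length_le_one)
  next
    case (3 a)
    have "real (\<Sum>k = 1..2 * a + 1. spread_length k) = real (\<Sum>k = 1..2 * a. spread_length k) + spread_length a + 2"
      using 3 spread_length_double_Suc[of a] by simp
    moreover have "log 2 a < spread_length a + 1"
      using 3 less_two_pow_spread_length[of a] log2_of_power_less by fastforce
    ultimately show ?thesis
      using 3 less.IH[of a] sum_odd[of a] log_fact_double_ge[of a] by simp
  next
    case (4 a)
    then show ?thesis
      using less.IH[of a] sum_odd[of a] log_fact_double_Suc_ge[of a] by simp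
  qed
qed

lemma sum_spread_length_le:
  assumes "1 \<le> n"
  shows "real (\<Sum>k = 1..n. spread_length k) \<le> 3/2 * real_of_int \<lfloor>log 2 (real (fact n))\<rfloor> + real n / 2"
proof (cases "n = 1")
  case True
  then show ?thesis by (simp add: spread_length_le_one)
next
  case False
  with assms have "2 * real (\<Sum>k = 1..n. spread_length k) + 3 \<le> real n + 3 * log 2 (fact n)"
    by (intro sum_spread_length_bound) simp
  moreover have "log 2 (fact n) < real_of_int \<lfloor>log 2 (real (fact n))\<rfloor> + 1"
    by simp
  ultimately show ?thesis by linarith
qed

lemma length_sym_mixing_seq: "length (sym_mixing_seq n) = (\<Sum>k = 1..n. spread_length k)"
  by (induction n) (simp_all add: length_spreading_seq)

lemma mixlen_le: "mixing_seq G s \<Longrightarrow> mixlen G \<le> length s"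
  unfolding mixlen_def by (rule Least_le) blast

theorem mainTheorem3:
  fixes n :: nat
  assumes "n \<ge> 1"
  shows "(\<exists>s. mixing_seq (sym_group n) s \<and> (\<forall>(g, p) \<in> set s. involution (sym_group n) g) \<and>
            real (length s) \<le> 3/2 * real_of_int \<lfloor>log 2 (real (fact n))\<rfloor> + real n / 2)
       \<and> real (mixlen (sym_group n)) \<le> 3/2 * real_of_int \<lfloor>log 2 (real (fact n))\<rfloor> + real n / 2"
proof -
  let ?s = "sym_mixing_seq n"
  have elems: "\<forall>(g, p) \<in> set ?s. g \<in> carrier (sym_group n) \<and> g \<circ> g = id \<and> g \<noteq> id \<and> 0 \<le> p \<and> p \<le> 1"
    using sym_mixing_seq_memD by fast
  then have mixing: "mixing_seq (sym_group n) ?s"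
    unfolding mixing_seq_def using random_subproduct_sym_mixing_seq by fast
  moreover have "\<forall>(g, p) \<in> set ?s. involution (sym_group n) g"
    using elems unfolding involution_def sym_group_mult sym_group_one by fast
  moreover have length: "real (length ?s) \<le> 3/2 * real_of_int \<lfloor>log 2 (real (fact n))\<rfloor> + real n / 2"
    unfolding length_sym_mixing_seq using assms by (rule sum_spread_length_le)
  moreover have "real (mixlen (sym_group n)) \<le> real (length ?s)" using mixing by (simp add: mixlen_le)
  ultimately show ?thesis by (meson order.trans)
qed

end
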